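(* Let $m\ge 2$ and $n\ge 3$ be integers. Then $\chi_{ei}(P_m\square C_n)=6$ if $n=3$; $=5$ if $n=5$; $=4$ if $n=7$; $=2$ if $n$ is even; and $=3$ if $n$ is odd and $n\ge 9$.
   Context: All graphs are finite and simple. $P_k$ and $C_k$ denote the path and the cycle on $k$ vertices. A path $P_4$ in $G$ is a sequence $uxyv$ of four distinct vertices with $ux,xy,yv\in E(G)$; $u,v$ are its end vertices. An $e$-injective $k$-coloring of $G$ is a function $f:V(G)\to\{1,\dots,k\}$ with $f(u)\ne f(v)$ whenever $u,v$ are the end vertices of some path $P_4$ in $G$; $\chi_{ei}(G)$ is the least such $k$. In the Cartesian product $G\square H$ two vertices are adjacent if they are adjacent in one coordinate and equal in the other. *)

theory Defs
  imports Main
begin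

text \<open>A finite simple graph is represented by a vertex set V and a symmetric,
irreflexive adjacency predicate E (only pairs inside V are adjacent).\<close>

definition path_V :: "nat \<Rightarrow> nat set" where
  "path_V k = {..<k}"

definition path_E :: "nat \<Rightarrow> nat \<Rightarrow> nat \<Rightarrow> bool" where
  "path_E k i j \<longleftrightarrow> i < k \<and> j < k \<and> (i + 1 = j \<or> j + 1 = i)"

definition cycle_V :: "nat \<Rightarrow> nat set" where
  "cycle_V k = {..<k}"

definition cycle_E :: "nat \<Rightarrow> nat \<Rightarrow> nat \<Rightarrow> bool" where
  "cycle_E k i j \<longleftrightarrow> i < k \<and> j < k \<and> i \<noteq> j \<and> (j = (i + 1) mod k \<or> i = (j + 1) mod k)"

definition cart_V :: "'a set \<Rightarrow> 'b set \<Rightarrow> ('a \<times> 'b) set" where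
  "cart_V V1 V2 = V1 \<times> V2"

definition cart_E :: "'a set \<Rightarrow> ('a \<Rightarrow> 'a \<Rightarrow> bool) \<Rightarrow> 'b set \<Rightarrow> ('b \<Rightarrow> 'b \<Rightarrow> bool)
    \<Rightarrow> 'a \<times> 'b \<Rightarrow> 'a \<times> 'b \<Rightarrow> bool" where
  "cart_E V1 E1 V2 E2 u v \<longleftrightarrow>
     (E1 (fst u) (fst v) \<and> snd u = snd v \<and> snd u \<in> V2) \<or>
     (fst u = fst v \<and> fst u \<in> V1 \<and> E2 (snd u) (snd v))"

definition P4_ends :: "'a set \<Rightarrow> ('a \<Rightarrow> 'a \<Rightarrow> bool) \<Rightarrow> 'a \<Rightarrow> 'a \<Rightarrow> bool" where
  "P4_ends V E u v \<longleftrightarrow> (\<exists>x y. distinct [u, x, y, v] \<and> u \<in> V \<and> x \<in> V \<and> y \<in> V \<and> v \<in> V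
      \<and> E u x \<and> E x y \<and> E y v)"

definition e_injective_coloring :: "'a set \<Rightarrow> ('a \<Rightarrow> 'a \<Rightarrow> bool) \<Rightarrow> nat \<Rightarrow> ('a \<Rightarrow> nat) \<Rightarrow> bool" where
  "e_injective_coloring V E k f \<longleftrightarrow>
     (\<forall>v\<in>V. f v \<in> {1..k}) \<and> (\<forall>u v. P4_ends V E u v \<longrightarrow> f u \<noteq> f v)"

definition chi_ei :: "'a set \<Rightarrow> ('a \<Rightarrow> 'a \<Rightarrow> bool) \<Rightarrow> nat" where
  "chi_ei V E = (LEAST k. \<exists>f. e_injective_coloring V E k f)"

end

(* An e-injective coloring of G is a proper coloring of the graph joining the end vertices
   of the P4s of G.  For n >= 4 this graph of P_m x C_n is homomorphically equivalent to the
   circulant C_n(1,3): every edge changes i + j by 1 or -1 modulo n, so (i, j) |-> (i + j) mod n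
   maps P4-ends to vertices at cyclic distance 1 or 3; conversely the row i = 0 carries a copy
   of C_n(1,3) (distance 1 through a detour via row 1, distance 3 along the row).  Hence the
   answer is the chromatic number of C_n(1,3): 2 for even n (parity), 5 for n = 5 (where
   C_5(1,3) = K_5), 4 for n = 7, and 3 for odd n >= 9 (odd cycle, explicit 3-coloring).
   For n = 3 the first two rows form a 6-clique of the P4-end graph, and (i mod 2, j) is a
   6-coloring. *)

theory Submission
  imports Defs "HOL-Number_Theory.Cong"
begin

section \<open>Proper colorings and graph homomorphisms\<close>

definition proper_coloring :: "'a set \<Rightarrow> ('a \<Rightarrow> 'a \<Rightarrow> bool) \<Rightarrow> nat \<Rightarrow> ('a \<Rightarrow> nat) \<Rightarrow> bool"
  where
  "proper_coloring V E k f \<longleftrightarrow> (\<forall>v\<in>V. f v \<in> {1..k}) \<and> (\<forall>u v. E u v \<longrightarrow> f u \<noteq> f v)"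

definition chromatic_number :: "'a set \<Rightarrow> ('a \<Rightarrow> 'a \<Rightarrow> bool) \<Rightarrow> nat" where
  "chromatic_number V E = (LEAST k. \<exists>f. proper_coloring V E k f)"

definition graph_hom ::
    "'a set \<Rightarrow> ('a \<Rightarrow> 'a \<Rightarrow> bool) \<Rightarrow> 'b set \<Rightarrow> ('b \<Rightarrow> 'b \<Rightarrow> bool) \<Rightarrow> ('a \<Rightarrow> 'b) \<Rightarrow> bool"
  where
  "graph_hom V E W F h \<longleftrightarrow> (\<forall>v\<in>V. h v \<in> W) \<and> (\<forall>u v. E u v \<longrightarrow> F (h u) (h v))"

definition complete_graph :: "'a set \<Rightarrow> 'a \<Rightarrow> 'a \<Rightarrow> bool" where
  "complete_graph S u v \<longleftrightarrow> u \<in> S \<and> v \<in> S \<and> u \<noteq> v"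

lemma chi_ei_eq_chromatic_number: "chi_ei V E = chromatic_number V (P4_ends V E)"
  unfolding chi_ei_def chromatic_number_def e_injective_coloring_def proper_coloring_def ..

lemma proper_coloring_comp:
  assumes "graph_hom V E W F h" and "proper_coloring W F k f"
  shows "proper_coloring V E k (f \<circ> h)"
  using assms unfolding graph_hom_def proper_coloring_def by auto

lemma proper_coloring_mono:
  assumes "proper_coloring V E k f" and "k \<le> l"
  shows "proper_coloring V E l f"
  using assms unfolding proper_coloring_def by auto

lemma chromatic_number_eq_if_homs:
  assumes "graph_hom V E W F h" and "graph_hom W F V E g"
  shows "chromatic_number V E = chromatic_number W F"
proof -
  have "(\<exists>f. proper_coloring V E k f) \<longleftrightarrow> (\<exists>f. proper_coloring W F k f)" for k
    using proper_coloring_comp[OF assms(1)] proper_coloring_comp[OF assms(2)] by blast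
  then show ?thesis unfolding chromatic_number_def by simp
qed

lemma chromatic_number_eqI:
  assumes "proper_coloring V E k f" and "\<And>g. \<not> proper_coloring V E (k - 1) g"
  shows "chromatic_number V E = k"
  unfolding chromatic_number_def
proof (rule Least_equality)
  show "\<exists>f. proper_coloring V E k f" using assms(1) by blast
next
  fix l assume "\<exists>g. proper_coloring V E l g"
  then obtain g where g: "proper_coloring V E l g" ..
  show "k \<le> l"
  proof (rule ccontr)
    assume "\<not> k \<le> l"
    then have "l \<le> k - 1" by simp
    then show False using proper_coloring_mono[OF g] assms(2) by blast
  qed
qed

lemma proper_coloring_complete_graph_card_le:
  assumes "proper_coloring S (complete_graph S) k f" and "finite S"
  shows "card S \<le> k"
proof -
  have "inj_on f S" and "f ` S \<subseteq> {1..k}"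
    using assms(1) unfolding proper_coloring_def complete_graph_def inj_on_def by blast+
  then show ?thesis using card_inj_on_le[of f S "{1..k}"] by simp
qed

lemma chromatic_number_complete_graph:
  assumes "finite S"
  shows "chromatic_number S (complete_graph S) = card S"
  unfolding chromatic_number_def
proof (rule Least_equality)
  obtain h where "bij_betw h S {0..<card S}" using ex_bij_betw_finite_nat[OF assms] by blast
  then have "proper_coloring S (complete_graph S) (card S) (Suc \<circ> h)"
    unfolding proper_coloring_def complete_graph_def bij_betw_def inj_on_def by (fastforce simp: Suc_le_eq)
  then show "\<exists>f. proper_coloring S (complete_graph S) (card S) f" by blast
qed (use proper_coloring_complete_graph_card_le assms in blast)

lemma P4_endsI:
  assumes "distinct [u, x, y, v]" and "u \<in> V" "x \<in> V" "y \<in> V" "v \<in> V"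
    and "E u x" "E x y" "E y v"
  shows "P4_ends V E u v"
  using assms unfolding P4_ends_def by blast

lemma P4_ends_sym:
  assumes "\<And>x y. E x y \<Longrightarrow> E y x" and "P4_ends V E u v"
  shows "P4_ends V E v u"
proof -
  obtain x y where "distinct [u, x, y, v]" "u \<in> V" "x \<in> V" "y \<in> V" "v \<in> V" "E u x" "E x y" "E y v"
    using assms(2) unfolding P4_ends_def by blast
  then show ?thesis by (intro P4_endsI[of v y x u]) (auto intro: assms(1))
qed

section \<open>The circulant graph \<open>C\<^sub>n(1, 3)\<close>\<close>

definition circulant :: "nat \<Rightarrow> nat set \<Rightarrow> nat \<Rightarrow> nat \<Rightarrow> bool" where
  "circulant n S a b \<longleftrightarrow> a < n \<and> b < n \<and> (\<exists>d\<in>S. b = (a + d) mod n \<or> a = (b + d) mod n)"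

lemma proper_coloring_circulant_iff:
  "proper_coloring {..<n} (circulant n S) k c \<longleftrightarrow>
     (\<forall>a<n. c a \<in> {1..k}) \<and> (\<forall>a<n. \<forall>d\<in>S. c ((a + d) mod n) \<noteq> c a)"
proof -
  have "(\<forall>a b. circulant n S a b \<longrightarrow> c a \<noteq> c b) \<longleftrightarrow> (\<forall>a<n. \<forall>d\<in>S. c ((a + d) mod n) \<noteq> c a)"
    unfolding circulant_def by (metis mod_less_divisor gr_implies_not0 neq0_conv)
  then show ?thesis unfolding proper_coloring_def by auto
qed

lemma circulant_commute: "circulant n S a b \<longleftrightarrow> circulant n S b a"
  unfolding circulant_def by auto

lemma circulant_mod_of_cong:
  assumes "0 < n" and "d \<in> S" and "[int b = int a + int d] (mod int n)"
  shows "circulant n S (a mod n) (b mod n)"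
proof -
  have "[b = a + d] (mod n)" using assms(3) by (metis cong_int_iff of_nat_add)
  then have "b mod n = (a mod n + d) mod n" unfolding cong_def by (simp add: mod_add_left_eq)
  then show ?thesis unfolding circulant_def using assms(1,2) by auto
qed

lemma chromatic_number_circulant_even:
  assumes "even n" and "2 \<le> n"
  shows "chromatic_number {..<n} (circulant n {1, 3}) = 2"
proof (rule chromatic_number_eqI)
  show "proper_coloring {..<n} (circulant n {1, 3}) 2 (\<lambda>a. 1 + a mod 2)"
  proof (unfold proper_coloring_circulant_iff, intro conjI allI impI ballI)
    fix a d :: nat assume "d \<in> {1, 3}"
    have "(a + d) mod n mod 2 = (a + d) mod 2" using assms(1) by (simp add: mod_mod_cancel)
    moreover have "(a + d) mod 2 \<noteq> a mod 2" using \<open>d \<in> {1, 3}\<close> by auto presburger+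
    ultimately show "1 + (a + d) mod n mod 2 \<noteq> 1 + a mod 2" by simp
  qed auto
next
  fix c
  show "\<not> proper_coloring {..<n} (circulant n {1, 3}) (2 - 1) c"
  proof
    assume "proper_coloring {..<n} (circulant n {1, 3}) (2 - 1) c"
    then have range: "\<And>a. a < n \<Longrightarrow> c a = 1"
      and step: "\<And>a d. a < n \<Longrightarrow> d \<in> {1, 3} \<Longrightarrow> c ((a + d) mod n) \<noteq> c a"
      unfolding proper_coloring_circulant_iff by auto
    have "c ((0 + 1) mod n) \<noteq> c 0" using step[of 0 1] assms(2) by simp
    then show False using range[of 0] range[of 1] assms(2) by simp
  qed
qed

lemma odd_circulant_not_2_colorable:
  assumes "odd n" and "1 \<in> S"
  shows "\<not> proper_coloring {..<n} (circulant n S) 2 c"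
proof
  assume col: "proper_coloring {..<n} (circulant n S) 2 c"
  have range: "c a \<in> {1..2}" if "a < n" for a
    using col that unfolding proper_coloring_circulant_iff by blast
  have step: "c ((a + 1) mod n) \<noteq> c a" if "a < n" for a
    using col that assms(2) unfolding proper_coloring_circulant_iff by blast
  have alternate: "c j = (if even j then c 0 else 3 - c 0)" if "j < n" for j
    using that
  proof (induction j)
    case (Suc j)
    have "c (Suc j) \<noteq> c j" using step[of j] Suc.prems by simp
    with Suc range[of j] range[of "Suc j"] range[of 0] show ?case by (cases "even j") auto
  qed simp
  have "c (n - 1) = c 0" using alternate[of "n - 1"] assms(1) odd_pos by fastforce
  moreover have "c ((n - 1 + 1) mod n) \<noteq> c (n - 1)" using step[of "n - 1"] assms(1) odd_pos by fastforce
  ultimately show False using assms(1) by simp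
qed

lemma circulant_5_eq_complete_graph: "circulant 5 {1, 3} = complete_graph {..<5}"
proof (intro ext)
  fix a b :: nat
  show "circulant 5 {1, 3} a b = complete_graph {..<5} a b"
  proof (cases "a < 5 \<and> b < 5")
    case True
    then have "a \<in> {0, 1, 2, 3, 4}" "b \<in> {0, 1, 2, 3, 4}" by auto
    then show ?thesis by (elim insertE emptyE) (simp_all add: circulant_def complete_graph_def)
  qed (auto simp: circulant_def complete_graph_def)
qed

definition circulant_7_coloring :: "nat \<Rightarrow> nat" where
  "circulant_7_coloring a = [1, 2, 1, 2, 3, 4, 3] ! a"

lemma proper_coloring_circulant_7: "proper_coloring {..<7} (circulant 7 {1, 3}) 4 circulant_7_coloring"
proof (unfold proper_coloring_circulant_iff, intro conjI allI impI ballI)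
  fix a :: nat assume "a < 7"
  then have a: "a \<in> {0, 1, 2, 3, 4, 5, 6}" by auto
  then show "circulant_7_coloring a \<in> {1..4}" by (auto simp: circulant_7_coloring_def)
  fix d :: nat assume "d \<in> {1, 3}"
  with a show "circulant_7_coloring ((a + d) mod 7) \<noteq> circulant_7_coloring a"
    by (elim insertE emptyE) (simp_all add: circulant_7_coloring_def)
qed

lemma circulant_7_not_3_colorable: "\<not> proper_coloring {..<7} (circulant 7 {1, 3}) 3 c"
proof
  assume "proper_coloring {..<7} (circulant 7 {1, 3}) 3 c"
  then have range: "\<And>a. a < 7 \<Longrightarrow> c a \<in> {1..3}"
    and step: "\<And>a d. a < 7 \<Longrightarrow> d \<in> {1, 3} \<Longrightarrow> c ((a + d) mod 7) \<noteq> c a"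
    unfolding proper_coloring_circulant_iff by auto
  \<comment> \<open>\<open>{a, a + 3, a + 6}\<close> and \<open>{a + 2, a + 3, a + 6}\<close> are triangles, so with three colors
    \<open>a + 2\<close> repeats the color of \<open>a\<close>; since 2 generates \<open>\<int>/7\<close>, the coloring would be constant.\<close>
  have period: "c b = c a" if "a < 7" and "b = (a + 2) mod 7" for a b
  proof -
    define x y z where "x = (a + 3) mod 7" and "y = (a + 6) mod 7" and "z = (a + 2) mod 7"
    have "x < 7" "y < 7" "z < 7" by (simp_all add: x_def y_def z_def)
    have "(a + 3) mod 7 = x" "(y + 1) mod 7 = a" "(x + 3) mod 7 = y" "(z + 1) mod 7 = x" "(y + 3) mod 7 = z"
      using that(1) unfolding x_def y_def z_def by presburger+
    note triangle_edges =
      step[OF that(1), of 3, unfolded this(1)] step[OF \<open>y < 7\<close>, of 1, unfolded this(2)]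
      step[OF \<open>x < 7\<close>, of 3, unfolded this(3)] step[OF \<open>z < 7\<close>, of 1, unfolded this(4)]
      step[OF \<open>y < 7\<close>, of 3, unfolded this(5)]
    show ?thesis
      using triangle_edges range[OF that(1)] range[OF \<open>x < 7\<close>] range[OF \<open>y < 7\<close>] range[OF \<open>z < 7\<close>]
      unfolding that(2) z_def by auto
  qed
  have "c 2 = c 0" "c 4 = c 2" "c 6 = c 4" "c 1 = c 6"
    by (rule period; simp)+
  then have "c 1 = c 0" by simp
  moreover have "c 1 \<noteq> c 0" using step[of 0 1] by simp
  ultimately show False by simp
qed

definition odd_circulant_coloring :: "nat \<Rightarrow> nat \<Rightarrow> nat" where
  "odd_circulant_coloring n a = (if a + 5 < n then 1 + a mod 2 else [3, 2, 3, 1, 3] ! (a + 5 - n))"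

lemma proper_coloring_circulant_odd:
  assumes "odd n" and "9 \<le> n"
  shows "proper_coloring {..<n} (circulant n {1, 3}) 3 (odd_circulant_coloring n)"
proof -
  define r where "r = n div 2 - 4"
  have n: "n = 2 * r + 9" using assms unfolding r_def by presburger
  show ?thesis
  proof (unfold proper_coloring_circulant_iff, intro conjI allI impI ballI)
    fix a assume "a < n"
    have "[3, 2, 3, 1, 3] ! (a + 5 - n) \<in> set [3, 2, 3, 1, 3 :: nat]" if "\<not> a + 5 < n"
      using that \<open>a < n\<close> by (intro nth_mem) simp
    then show "odd_circulant_coloring n a \<in> {1..3}"
      unfolding odd_circulant_coloring_def by auto
    fix d :: nat assume d: "d \<in> {1, 3}"
    show "odd_circulant_coloring n ((a + d) mod n) \<noteq> odd_circulant_coloring n a"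
    proof (cases "a + d < 2 * r + 4")
      case True
      have "(a + d) mod 2 \<noteq> a mod 2" using d by auto presburger+
      then show ?thesis using True by (simp add: odd_circulant_coloring_def n)
    next
      case False
      then have "a \<in> {2 * r + 1, 2 * r + 2, 2 * r + 3, 2 * r + 4, 2 * r + 5, 2 * r + 6, 2 * r + 7, 2 * r + 8}"
        using \<open>a < n\<close> d unfolding n by auto
      moreover have "(a + d) mod n = (if a + d < n then a + d else a + d - n)"
        using \<open>a < n\<close> d assms(2) by (auto simp: le_mod_geq)
      ultimately show ?thesis using d
        by (elim insertE emptyE) (simp_all add: odd_circulant_coloring_def n)
    qed
  qed
qed

lemma chromatic_number_circulant_1_3:
  assumes "4 \<le> n"
  shows "chromatic_number {..<n} (circulant n {1, 3}) =
           (if n = 5 then 5 else if n = 7 then 4 else if even n then 2 else 3)"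
proof -
  have "n = 5 \<or> n = 7 \<or> even n \<or> odd n \<and> 9 \<le> n" using assms by presburger
  then consider "n = 5" | "n = 7" | "even n" | "odd n" "9 \<le> n" by blast
  then show ?thesis
  proof cases
    case 1
    have "chromatic_number {..<5} (circulant 5 {1, 3}) = 5"
      unfolding circulant_5_eq_complete_graph by (simp add: chromatic_number_complete_graph)
    then show ?thesis using 1 by simp
  next
    case 2
    have "chromatic_number {..<7} (circulant 7 {1, 3}) = 4"
      using circulant_7_not_3_colorable by (intro chromatic_number_eqI[OF proper_coloring_circulant_7]) simp_all
    then show ?thesis using 2 by simp
  next
    case 3
    with assms have "n \<noteq> 5" "n \<noteq> 7" and "2 \<le> n" by auto
    with 3 show ?thesis using chromatic_number_circulant_even[OF 3 \<open>2 \<le> n\<close>] by simp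
  next
    case 4
    then have "chromatic_number {..<n} (circulant n {1, 3}) = 3"
      by (intro chromatic_number_eqI[OF proper_coloring_circulant_odd]) (simp_all add: odd_circulant_not_2_colorable)
    with 4 show ?thesis by auto
  qed
qed

section \<open>The P4-end graph of \<open>P\<^sub>m \<box> C\<^sub>n\<close>\<close>

abbreviation cylinder_V :: "nat \<Rightarrow> nat \<Rightarrow> (nat \<times> nat) set" where
  "cylinder_V m n \<equiv> cart_V (path_V m) (cycle_V n)"

abbreviation cylinder_E :: "nat \<Rightarrow> nat \<Rightarrow> nat \<times> nat \<Rightarrow> nat \<times> nat \<Rightarrow> bool" where
  "cylinder_E m n \<equiv> cart_E (path_V m) (path_E m) (cycle_V n) (cycle_E n)"

lemma mem_cylinder_V [simp]: "(i, j) \<in> cylinder_V m n \<longleftrightarrow> i < m \<and> j < n"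
  by (simp add: cart_V_def path_V_def cycle_V_def)

lemma cylinder_E_iff:
  "cylinder_E m n (i, j) (i', j') \<longleftrightarrow>
     (i < m \<and> i' < m \<and> (i + 1 = i' \<or> i' + 1 = i) \<and> j = j' \<and> j < n) \<or> (i = i' \<and> i < m \<and> cycle_E n j j')"
  by (auto simp: cart_E_def path_E_def cycle_V_def path_V_def)

lemma path_E_sym: "path_E k i j \<Longrightarrow> path_E k j i"
  unfolding path_E_def by auto

lemma cycle_E_sym: "cycle_E k i j \<Longrightarrow> cycle_E k j i"
  unfolding cycle_E_def by auto

lemma cart_E_sym:
  assumes "\<And>a b. E1 a b \<Longrightarrow> E1 b a" and "\<And>a b. E2 a b \<Longrightarrow> E2 b a"
    and "cart_E V1 E1 V2 E2 u v"
  shows "cart_E V1 E1 V2 E2 v u"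
  using assms unfolding cart_E_def by auto

lemmas cylinder_E_sym = cart_E_sym[of "path_E m" "cycle_E n" for m n, OF path_E_sym cycle_E_sym]

lemma int_cong_Suc_mod: "[int ((j + 1) mod n) = int j + 1] (mod int n)"
  by (simp add: cong_def zmod_int add.commute)

lemma cylinder_E_diagonal_step:
  assumes "cylinder_E m n u x"
  shows "\<exists>e\<in>{-1, 1}. [int (fst x + snd x) = int (fst u + snd u) + e] (mod int n)"
proof -
  obtain i j i' j' where u: "u = (i, j)" and x: "x = (i', j')" by fastforce
  from assms consider "i' = i + 1" "j' = j" | "i = i' + 1" "j' = j"
    | "i' = i" "j' = (j + 1) mod n" | "i' = i" "j = (j' + 1) mod n"
    unfolding u x cylinder_E_iff cycle_E_def by auto
  then show ?thesis
  proof cases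
    case 1
    then show ?thesis unfolding u x by (intro bexI[of _ 1]) (simp_all add: add_ac)
  next
    case 2
    then show ?thesis unfolding u x by (intro bexI[of _ "-1"]) (simp_all add: add_ac)
  next
    case 3
    then have "[int i + int j' = int i + (int j + 1)] (mod int n)"
      using int_cong_Suc_mod[of j n] by (intro cong_add cong_refl) simp
    then show ?thesis using 3 unfolding u x by (intro bexI[of _ 1]) (simp_all add: add_ac)
  next
    case 4
    then have "[int i + int j + - 1 = int i + (int j' + 1) + - 1] (mod int n)"
      using int_cong_Suc_mod[of j' n] by (intro cong_add cong_refl) simp
    then show ?thesis using 4 unfolding u x by (intro bexI[of _ "-1"]) (simp_all add: cong_sym_eq)
  qed
qed

lemma P4_ends_cylinder_diagonal:
  assumes "P4_ends (cylinder_V m n) (cylinder_E m n) u v"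
  shows "\<exists>d\<in>{1, 3}. [int (fst v + snd v) = int (fst u + snd u) + int d] (mod int n)
                  \<or> [int (fst u + snd u) = int (fst v + snd v) + int d] (mod int n)"
proof -
  define T where "T w = int (fst w + snd w)" for w :: "nat \<times> nat"
  obtain x y where "cylinder_E m n u x" "cylinder_E m n x y" "cylinder_E m n y v"
    using assms unfolding P4_ends_def by blast
  then obtain e1 e2 e3 where e: "e1 \<in> {-1, 1}" "e2 \<in> {-1, 1}" "e3 \<in> {-1, 1}"
    and steps: "[T x = T u + e1] (mod int n)" "[T y = T x + e2] (mod int n)" "[T v = T y + e3] (mod int n)"
    unfolding T_def by (metis cylinder_E_diagonal_step)
  have "[T v = T y + e3] (mod int n)" by (rule steps(3))
  also have "[T y + e3 = T x + e2 + e3] (mod int n)" using steps(2) by (intro cong_add cong_refl)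
  also have "[T x + e2 + e3 = T u + e1 + e2 + e3] (mod int n)" using steps(1) by (intro cong_add cong_refl)
  finally have walk: "[T v = T u + (e1 + e2 + e3)] (mod int n)" by (simp add: add.assoc)
  from e consider "e1 + e2 + e3 = 1" | "e1 + e2 + e3 = 3" | "e1 + e2 + e3 = - 1" | "e1 + e2 + e3 = - 3"
    by auto
  then show ?thesis
  proof cases
    case 1
    with walk show ?thesis unfolding T_def by auto
  next
    case 2
    with walk show ?thesis unfolding T_def by auto
  next
    case 3
    with walk have "[T v + 1 = T u] (mod int n)" using cong_add[OF walk cong_refl[of 1]] by simp
    then show ?thesis unfolding T_def by (auto simp: cong_sym_eq)
  next
    case 4
    with walk have "[T v + 3 = T u] (mod int n)" using cong_add[OF walk cong_refl[of 3]] by simp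
    then show ?thesis unfolding T_def by (auto simp: cong_sym_eq)
  qed
qed

lemma graph_hom_cylinder_P4_circulant:
  assumes "0 < n"
  shows "graph_hom (cylinder_V m n) (P4_ends (cylinder_V m n) (cylinder_E m n))
           {..<n} (circulant n {1, 3}) (\<lambda>(i, j). (i + j) mod n)"
  unfolding graph_hom_def
proof (intro conjI allI impI ballI)
  fix u v assume "P4_ends (cylinder_V m n) (cylinder_E m n) u v"
  then obtain d where "d \<in> {1, 3}"
    and "[int (fst v + snd v) = int (fst u + snd u) + int d] (mod int n)
         \<or> [int (fst u + snd u) = int (fst v + snd v) + int d] (mod int n)"
    using P4_ends_cylinder_diagonal by blast
  then have "circulant n {1, 3} ((fst u + snd u) mod n) ((fst v + snd v) mod n)"
    using circulant_mod_of_cong[OF assms] circulant_commute by blast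
  then show "circulant n {1, 3} ((\<lambda>(i, j). (i + j) mod n) u) ((\<lambda>(i, j). (i + j) mod n) v)"
    by (simp add: case_prod_beta)
qed (use assms in auto)

lemma add_mod_eq_imp_eq:
  fixes a i j n :: nat
  assumes "(a + i) mod n = (a + j) mod n" and "i < n" and "j < n"
  shows "i = j"
proof -
  have "[i = j] (mod n)" using assms(1) unfolding cong_def[symmetric] by (rule cong_add_lcancel_nat[THEN iffD1])
  then show "i = j" using assms(2,3) by (simp add: cong_def)
qed

lemma cycle_E_Suc_mod:
  assumes "2 \<le> n"
  shows "cycle_E n (a mod n) ((a + 1) mod n)"
proof -
  have "(a + 1) mod n \<noteq> (a + 0) mod n" using add_mod_eq_imp_eq[of a 1 n 0] assms by auto
  then show ?thesis using assms unfolding cycle_E_def by (simp add: mod_Suc_eq)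
qed

lemma P4_ends_cylinder_row:
  assumes "2 \<le> m" and "4 \<le> n" and "a < n" and "d \<in> {1, 3}"
  shows "P4_ends (cylinder_V m n) (cylinder_E m n) (0, a) (0, (a + d) mod n)"
  using assms(4)
proof (elim insertE emptyE)
  assume "d = 1"
  have "a \<noteq> (a + 1) mod n" "cycle_E n a ((a + 1) mod n)"
    using cycle_E_Suc_mod[of n a] assms(2,3) by (simp_all add: cycle_E_def)
  then show ?thesis
    unfolding \<open>d = 1\<close> using assms(1-3)
    by (intro P4_endsI[of _ "(1, a)" "(1, (a + 1) mod n)"]) (auto simp: cylinder_E_iff)
next
  assume "d = 3"
  have "(a + i) mod n \<noteq> (a + j) mod n" if "i < j" "j \<le> 3" for i j
    using add_mod_eq_imp_eq[of a i n j] that assms(2) by auto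
  note distinct = this[of 0 1] this[of 0 2] this[of 0 3] this[of 1 2] this[of 1 3] this[of 2 3]
  have edge: "cycle_E n ((a + k) mod n) ((a + Suc k) mod n)" for k
    using cycle_E_Suc_mod[of n "a + k"] assms(2) by simp
  show ?thesis
    unfolding \<open>d = 3\<close> using assms(1-3) distinct edge[of 0] edge[of 1] edge[of 2]
    by (intro P4_endsI[of _ "(0, (a + 1) mod n)" "(0, (a + 2) mod n)"]) (auto simp: cylinder_E_iff)
qed

lemma graph_hom_circulant_cylinder_P4:
  assumes "2 \<le> m" and "4 \<le> n"
  shows "graph_hom {..<n} (circulant n {1, 3})
           (cylinder_V m n) (P4_ends (cylinder_V m n) (cylinder_E m n)) (\<lambda>j. (0, j))"
  unfolding graph_hom_def
proof (intro conjI allI impI ballI)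
  fix a b assume "circulant n {1, 3} a b"
  then obtain d where "a < n" "b < n" "d \<in> {1, 3}" and "b = (a + d) mod n \<or> a = (b + d) mod n"
    unfolding circulant_def by blast
  then show "P4_ends (cylinder_V m n) (cylinder_E m n) (0, a) (0, b)"
    using P4_ends_cylinder_row[OF assms \<open>a < n\<close> \<open>d \<in> {1, 3}\<close>]
      P4_ends_sym[OF cylinder_E_sym P4_ends_cylinder_row[OF assms \<open>b < n\<close> \<open>d \<in> {1, 3}\<close>]]
    by blast
qed (use assms in auto)

lemma cylinder_E_parity_cases:
  assumes "cylinder_E m n u x"
  shows "(even (fst x) \<longleftrightarrow> odd (fst u)) \<and> snd x = snd u \<or> fst x = fst u \<and> snd x \<noteq> snd u"
proof -
  obtain i j i' j' where u: "u = (i, j)" and x: "x = (i', j')" by fastforce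
  show ?thesis using assms unfolding u x cylinder_E_iff cycle_E_def by auto
qed

lemma graph_hom_cylinder_P4_parity:
  "graph_hom (cylinder_V m n) (P4_ends (cylinder_V m n) (cylinder_E m n))
     ({..<2} \<times> {..<n}) (complete_graph ({..<2} \<times> {..<n})) (\<lambda>(i, j). (i mod 2, j))"
  unfolding graph_hom_def
proof (intro conjI allI impI ballI)
  fix u v assume "P4_ends (cylinder_V m n) (cylinder_E m n) u v"
  then obtain x y where "u \<noteq> v" "u \<in> cylinder_V m n" "v \<in> cylinder_V m n"
    and "cylinder_E m n u x" "cylinder_E m n x y" "cylinder_E m n y v"
    unfolding P4_ends_def by auto
  note steps = this(4-6)[THEN cylinder_E_parity_cases]
  \<comment> \<open>Equal row parity at the ends forces 0 or 2 vertical steps: with one horizontal step the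
    columns differ, with three the walk stays in one row and \<open>u = v\<close>.\<close>
  have "fst u mod 2 \<noteq> fst v mod 2 \<or> snd u \<noteq> snd v"
  proof (rule ccontr)
    assume "\<not> ?thesis"
    then have "even (fst u) \<longleftrightarrow> even (fst v)" and "snd u = snd v" by presburger+
    with steps \<open>u \<noteq> v\<close> show False by (auto simp: prod_eq_iff)
  qed
  with \<open>u \<in> cylinder_V m n\<close> \<open>v \<in> cylinder_V m n\<close>
  show "complete_graph ({..<2} \<times> {..<n}) ((\<lambda>(i, j). (i mod 2, j)) u) ((\<lambda>(i, j). (i mod 2, j)) v)"
    unfolding complete_graph_def by (auto simp: case_prod_beta cart_V_def cycle_V_def)
qed (auto simp: cart_V_def cycle_V_def)

lemma cycle_E_3: "cycle_E 3 j j' \<longleftrightarrow> j < 3 \<and> j' < 3 \<and> j \<noteq> j'"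
  unfolding cycle_E_def by (auto; presburger)

lemma graph_hom_complete_cylinder_P4_3:
  assumes "2 \<le> m"
  shows "graph_hom ({..<2} \<times> {..<3}) (complete_graph ({..<2} \<times> {..<3}))
           (cylinder_V m 3) (P4_ends (cylinder_V m 3) (cylinder_E m 3)) id"
  unfolding graph_hom_def
proof (intro conjI allI impI ballI)
  fix u v :: "nat \<times> nat" assume "complete_graph ({..<2} \<times> {..<3}) u v"
  then obtain i j i' j' where u: "u = (i, j)" and v: "v = (i', j')"
    and "i < 2" "i' < 2" "j < 3" "j' < 3" "u \<noteq> v"
    unfolding complete_graph_def by auto
  then consider "i = i'" "j \<noteq> j'" | "i' = 1 - i" "j = j'" | "i' = 1 - i" "j \<noteq> j'"
    by fastforce
  then show "P4_ends (cylinder_V m 3) (cylinder_E m 3) (id u) (id v)"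
  proof cases
    case 1
    then show ?thesis unfolding u v id_def using \<open>i < 2\<close> \<open>j < 3\<close> \<open>j' < 3\<close> assms
      by (intro P4_endsI[of _ "(1 - i, j)" "(1 - i, j')"]) (auto simp: cylinder_E_iff cycle_E_3 less_2_cases_iff)
  next
    case 2
    have "(j + 1) mod 3 \<noteq> j" by presburger
    with 2 show ?thesis unfolding u v id_def using \<open>i < 2\<close> \<open>j < 3\<close> assms
      by (intro P4_endsI[of _ "(i, (j + 1) mod 3)" "(i', (j + 1) mod 3)"]) (auto simp: cylinder_E_iff cycle_E_3 less_2_cases_iff)
  next
    case 3
    moreover have "3 - j - j' \<noteq> j" "3 - j - j' \<noteq> j'" using 3 \<open>j < 3\<close> \<open>j' < 3\<close> by arith+
    ultimately show ?thesis unfolding u v id_def using \<open>i < 2\<close> \<open>j < 3\<close> \<open>j' < 3\<close> assms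
      by (intro P4_endsI[of _ "(i', j)" "(i', 3 - j - j')"]) (auto simp: cylinder_E_iff cycle_E_3 less_2_cases_iff)
  qed
qed (use assms in auto)

lemma chromatic_number_cylinder_P4_3:
  assumes "2 \<le> m"
  shows "chromatic_number (cylinder_V m 3) (P4_ends (cylinder_V m 3) (cylinder_E m 3)) = 6"
proof -
  have "chromatic_number (cylinder_V m 3) (P4_ends (cylinder_V m 3) (cylinder_E m 3)) =
          chromatic_number ({..<2} \<times> {..<3 :: nat}) (complete_graph ({..<2 :: nat} \<times> {..<3}))"
    using graph_hom_cylinder_P4_parity graph_hom_complete_cylinder_P4_3[OF assms]
    by (rule chromatic_number_eq_if_homs)
  then show ?thesis by (simp add: chromatic_number_complete_graph)
qed

lemma chromatic_number_cylinder_P4_eq_circulant: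
  assumes "2 \<le> m" and "4 \<le> n"
  shows "chromatic_number (cylinder_V m n) (P4_ends (cylinder_V m n) (cylinder_E m n)) =
           chromatic_number {..<n} (circulant n {1, 3})"
proof -
  have "0 < n" using assms(2) by simp
  show ?thesis
    using graph_hom_cylinder_P4_circulant[OF \<open>0 < n\<close>] graph_hom_circulant_cylinder_P4[OF assms]
    by (rule chromatic_number_eq_if_homs)
qed

theorem theorem4p4:
  fixes m n :: nat
  assumes "m \<ge> 2" and "n \<ge> 3"
  shows "chi_ei (cart_V (path_V m) (cycle_V n))
                (cart_E (path_V m) (path_E m) (cycle_V n) (cycle_E n)) =
         (if n = 3 then 6 else if n = 5 then 5 else if n = 7 then 4
          else if even n then 2 else 3)"
proof -
  have "chi_ei (cylinder_V m n) (cylinder_E m n) =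
          chromatic_number (cylinder_V m n) (P4_ends (cylinder_V m n) (cylinder_E m n))"
    by (rule chi_ei_eq_chromatic_number)
  also have "\<dots> = (if n = 3 then 6 else if n = 5 then 5 else if n = 7 then 4
                     else if even n then 2 else 3)"
  proof (cases "n = 3")
    case True
    then show ?thesis using chromatic_number_cylinder_P4_3[OF assms(1)] by simp
  next
    case False
    with assms(2) have "4 \<le> n" by simp
    then show ?thesis
      using False chromatic_number_cylinder_P4_eq_circulant[OF assms(1)] chromatic_number_circulant_1_3
      by simp
  qed
  finally show ?thesis .
qed

end
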